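(* Let $(\mathcal S,\mathcal A,P,R,\rho)$ be a finite Episodic Learning Process with terminal set $\mathcal S_\bot$, and let $\gamma:\mathcal S\to[0,1]$ be any discounting function such that $\gamma(s)<1$ for every terminal state $s\in\mathcal S_\bot$. Then: (1) $\mathcal B^\gamma$ has a unique fixed point in $\mathcal Q$, i.e. the equation $Q=\mathcal B^\gamma Q$ has exactly one solution $Q\in\mathcal Q$; (2) this fixed point equals $\lim_{n\to\infty}(\mathcal B^\gamma)^n Q$ for every $Q\in\mathcal Q$; (3) when $\gamma=\gamma_{\mathrm{epi}}$, the fixed point $Q^*$ of $\mathcal B^{\gamma_{\mathrm{epi}}}$ is an optimal Q-function: every policy $\pi^*$ with $\pi^*(a|s)>0$ only if $Q^*(s,a)=\max_{\bar a}Q^*(s,\bar a)$ satisfies $J(\pi^* )=\max_\pi J(\pi)$.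
   Context: A finite Episodic Learning Process (ELP) is a tuple $(\mathcal S,\mathcal A,P,R,\rho)$ with finite state space $\mathcal S$, finite action space $\mathcal A$, reward function $R:\mathcal S\to\mathbb R$, transition probabilities $P(s'|s,a)$, distribution $\rho$ on $\mathcal S$, and a nonempty set of terminal states $\mathcal S_\bot\subseteq\mathcal S$. A policy $\pi$ assigns to each $s$ a distribution $\pi(\cdot|s)$ on $\mathcal A$. Running $\pi$ gives a process $S_0,A_0,S_1,A_1,\dots$ with $S_0$ a fixed terminal state, $A_t\sim\pi(\cdot|S_t)$, $S_{t+1}\sim P(\cdot|S_t,A_t)$; write $\mathbb P_\pi,\mathbb E_\pi$. The termination time is $T=\inf\{t\ge1:S_t\in\mathcal S_\bot\}$. The ELP conditions are: (i) $\mathbb E_\pi[T]<\infty$ for every policy $\pi$; (ii) $P(s'|s,a)=\rho(s')$ for all $s\in\mathcal S_\bot$, $a\in\mathcal A$, $s'\in\mathcal S$; (iii) every state of $\mathcal S$ is reachable, i.e. for each $s$ there exist a policy $\pi$ and $t\ge1$ with $\mathbb P_\pi(S_t=s)>0$. The objective is $J(\pi)=\mathbb E_\pi[\sum_{t=1}^T R(S_t)]$; a policy is optimal if it maximizes $J$ over all policies. $\mathcal Q$ denotes the set of all functions $Q:\mathcal S\times\mathcal A\to\mathbb R$. For $\gamma:\mathcal S\to[0,1]$, the generalized Bellman optimality operator is $\mathcal B^\gamma Q(s,a)=\sum_{s'\in\mathcal S}P(s'|s,a)\big(R(s')+\gamma(s')\max_{a'\in\mathcal A}Q(s',a')\big)$.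 The episodic discounting function is $\gamma_{\mathrm{epi}}(s)=1$ if $s\notin\mathcal S_\bot$ and $0$ if $s\in\mathcal S_\bot$. A Q-function $Q$ is an optimal Q-function if every $Q$-greedy policy (one with $\pi(a|s)>0$ only if $Q(s,a)=\max_{\bar a}Q(s,\bar a)$) is optimal. *)

theory Defs
  imports "HOL-Analysis.Analysis"
begin

text \<open>Finite ELP with state type 's::finite and action type 'a::finite.
  Transition kernel P s a s' = P(s'|s,a); policy pol s a = pol(a|s).\<close>

definition is_policy :: "('s::finite \<Rightarrow> 'a::finite \<Rightarrow> real) \<Rightarrow> bool" where
  "is_policy pol \<longleftrightarrow> (\<forall>s a. 0 \<le> pol s a) \<and> (\<forall>s. (\<Sum>a\<in>UNIV. pol s a) = 1)"

definition trans_pol :: "('s::finite \<Rightarrow> 'a::finite \<Rightarrow> 's \<Rightarrow> real) \<Rightarrow> ('s \<Rightarrow> 'a \<Rightarrow> real) \<Rightarrow> 's \<Rightarrow> 's \<Rightarrow> real" where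
  "trans_pol P pol s s' = (\<Sum>a\<in>UNIV. pol s a * P s a s')"

fun state_dist :: "('s::finite \<Rightarrow> 'a::finite \<Rightarrow> 's \<Rightarrow> real) \<Rightarrow> ('s \<Rightarrow> 'a \<Rightarrow> real) \<Rightarrow> 's \<Rightarrow> nat \<Rightarrow> 's \<Rightarrow> real" where
  "state_dist P pol s0 0 s = (if s = s0 then 1 else 0)"
| "state_dist P pol s0 (Suc t) s' = (\<Sum>s\<in>UNIV. state_dist P pol s0 t s * trans_pol P pol s s')"

text \<open>surv_dist P pol s0 Sbot t s = P_pi(S_t = s and S_u \<notin> Sbot for all 1 \<le> u < t);
  for t \<ge> 1 this is P_pi(S_t = s, T \<ge> t).\<close>
fun surv_dist :: "('s::finite \<Rightarrow> 'a::finite \<Rightarrow> 's \<Rightarrow> real) \<Rightarrow> ('s \<Rightarrow> 'a \<Rightarrow> real) \<Rightarrow> 's \<Rightarrow> 's set \<Rightarrow> nat \<Rightarrow> 's \<Rightarrow> real" where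
  "surv_dist P pol s0 Sbot 0 s = (if s = s0 then 1 else 0)"
| "surv_dist P pol s0 Sbot (Suc t) s' =
     (\<Sum>s\<in>UNIV. (if 1 \<le> t \<and> s \<in> Sbot then 0 else surv_dist P pol s0 Sbot t s) * trans_pol P pol s s')"

text \<open>E_pi[T] < infinity, where E[T] = sum_{t>=1} P(T >= t).\<close>
definition finite_exp_term :: "('s::finite \<Rightarrow> 'a::finite \<Rightarrow> 's \<Rightarrow> real) \<Rightarrow> ('s \<Rightarrow> 'a \<Rightarrow> real) \<Rightarrow> 's \<Rightarrow> 's set \<Rightarrow> bool" where
  "finite_exp_term P pol s0 Sbot \<longleftrightarrow> summable (\<lambda>t. \<Sum>s\<in>UNIV. surv_dist P pol s0 Sbot (Suc t) s)"

text \<open>J(pol) = E_pi[sum_{t=1}^T R(S_t)] = sum_{t>=1} sum_s P(S_t = s, T >= t) R(s).\<close>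
definition Jval :: "('s::finite \<Rightarrow> 'a::finite \<Rightarrow> 's \<Rightarrow> real) \<Rightarrow> ('s \<Rightarrow> real) \<Rightarrow> 's \<Rightarrow> 's set \<Rightarrow> ('s \<Rightarrow> 'a \<Rightarrow> real) \<Rightarrow> real" where
  "Jval P R s0 Sbot pol = (\<Sum>t. \<Sum>s\<in>UNIV. surv_dist P pol s0 Sbot (Suc t) s * R s)"

definition is_ELP :: "('s::finite \<Rightarrow> 'a::finite \<Rightarrow> 's \<Rightarrow> real) \<Rightarrow> ('s \<Rightarrow> real) \<Rightarrow> 's set \<Rightarrow> 's \<Rightarrow> bool" where
  "is_ELP P rho Sbot s0 \<longleftrightarrow>
     (\<forall>s a s'. 0 \<le> P s a s') \<and> (\<forall>s a. (\<Sum>s'\<in>UNIV. P s a s') = 1) \<and>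
     (\<forall>s. 0 \<le> rho s) \<and> (\<Sum>s\<in>UNIV. rho s) = 1 \<and>
     Sbot \<noteq> {} \<and> s0 \<in> Sbot \<and>
     (\<forall>pol. is_policy pol \<longrightarrow> finite_exp_term P pol s0 Sbot) \<and>
     (\<forall>s\<in>Sbot. \<forall>a s'. P s a s' = rho s') \<and>
     (\<forall>s. \<exists>pol t. is_policy pol \<and> 1 \<le> t \<and> state_dist P pol s0 t s > 0)"

definition bellman :: "('s::finite \<Rightarrow> 'a::finite \<Rightarrow> 's \<Rightarrow> real) \<Rightarrow> ('s \<Rightarrow> real) \<Rightarrow> ('s \<Rightarrow> real) \<Rightarrow> ('s \<Rightarrow> 'a \<Rightarrow> real) \<Rightarrow> ('s \<Rightarrow> 'a \<Rightarrow> real)" where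
  "bellman P R \<gamma> Q s a = (\<Sum>s'\<in>UNIV. P s a s' * (R s' + \<gamma> s' * (MAX a'. Q s' a')))"

definition gamma_epi :: "'s set \<Rightarrow> 's \<Rightarrow> real" where
  "gamma_epi Sbot s = (if s \<in> Sbot then 0 else 1)"

definition greedy :: "('s::finite \<Rightarrow> 'a::finite \<Rightarrow> real) \<Rightarrow> ('s \<Rightarrow> 'a \<Rightarrow> real) \<Rightarrow> bool" where
  "greedy Q pol \<longleftrightarrow> (\<forall>s a. pol s a > 0 \<longrightarrow> Q s a = (MAX b. Q s b))"

end

theory Submission
  imports Defs
begin

text \<open>Let \<open>max_discount n s\<close> be the largest expected product \<open>\<gamma>(S\<^sub>1) \<cdots> \<gamma>(S\<^sub>n)\<close> over \<open>n\<close>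
  steps from \<open>s\<close>. Since the expected termination time is finite under every policy, no set of
  non-terminal states is closed under a deterministic policy; so every run meets a terminal
  state, where \<open>\<gamma> < 1\<close>, and \<open>max_discount N < 1\<close> for some \<open>N\<close>. Then the \<open>N\<close>-fold Bellman
  operator is a contraction for the sup distance, which yields a unique fixed point and
  geometric convergence of value iteration.
  For \<open>\<gamma> = \<gamma>\<^sub>e\<^sub>p\<^sub>i\<close>, consider the return up to time \<open>k + 1\<close> completed by the value
  \<open>max\<^sub>a Q\<^sup>*(S\<^sub>k\<^sub>+\<^sub>1, a)\<close>. By the fixed-point equation it starts at the same value for every
  policy, never increases, and stays constant for \<open>Q\<^sup>*\<close>-greedy policies; as \<open>k \<rightarrow> \<infinity>\<close> it
  tends to \<open>J(\<pi>)\<close>.\<close>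

lemma Max_range_ge: "f x \<le> (MAX a. f (a::'a::finite))"
  by (rule Max_ge) auto

lemma Max_range_le_iff: "(MAX a. f (a::'a::finite)) \<le> c \<longleftrightarrow> (\<forall>a. f a \<le> c)"
  by (subst Max_le_iff) auto

lemma Max_range_less_iff: "(MAX a. f (a::'a::finite)) < c \<longleftrightarrow> (\<forall>a. f a < c)"
  by (subst Max_less_iff) auto

lemma Max_range_attained: obtains x where "(MAX a. f (a::'a::finite)) = f x"
proof -
  have "(MAX a. f a) \<in> range f" by (rule Max_in) auto
  then show ?thesis using that by blast
qed

lemma abs_Max_diff_le:
  fixes f g :: "'a::finite \<Rightarrow> real"
  shows "\<bar>(MAX a. f a) - (MAX a. g a)\<bar> \<le> (MAX a. \<bar>f a - g a\<bar>)"
proof -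
  obtain x where x: "(MAX a. f a) = f x" by (rule Max_range_attained)
  obtain y where y: "(MAX a. g a) = g y" by (rule Max_range_attained)
  have "f x - g x \<le> (MAX a. \<bar>f a - g a\<bar>)" "g y - f y \<le> (MAX a. \<bar>f a - g a\<bar>)"
    using Max_range_ge[of "\<lambda>a. \<bar>f a - g a\<bar>"] by (smt (verit))+
  moreover have "g x \<le> g y" "f y \<le> f x"
    using x y Max_range_ge[of g] Max_range_ge[of f] by metis+
  ultimately show ?thesis using x y by linarith
qed

lemma tendsto_Max_range:
  fixes f :: "nat \<Rightarrow> 'a::finite \<Rightarrow> real"
  assumes "\<And>a. (\<lambda>n. f n a) \<longlonglongrightarrow> l a"
  shows "(\<lambda>n. MAX a. f n a) \<longlonglongrightarrow> (MAX a. l a)"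
proof -
  have "(\<lambda>n. \<Sum>a\<in>UNIV. \<bar>f n a - l a\<bar>) \<longlonglongrightarrow> (\<Sum>a\<in>UNIV. \<bar>l a - l a\<bar>)"
    by (intro tendsto_intros assms)
  then have sum_to_0: "(\<lambda>n. \<Sum>a\<in>UNIV. \<bar>f n a - l a\<bar>) \<longlonglongrightarrow> 0"
    by simp
  have Max_le_sum: "(MAX a. \<bar>f n a - l a\<bar>) \<le> (\<Sum>a\<in>UNIV. \<bar>f n a - l a\<bar>)" for n
    unfolding Max_range_le_iff by (intro allI member_le_sum) auto
  have "norm ((MAX a. f n a) - (MAX a. l a)) \<le> (\<Sum>a\<in>UNIV. \<bar>f n a - l a\<bar>)" for n
    using order.trans[OF abs_Max_diff_le Max_le_sum] by simp
  then have "(\<lambda>n. (MAX a. f n a) - (MAX a. l a)) \<longlonglongrightarrow> 0"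
    by (intro Lim_null_comparison[OF _ sum_to_0] always_eventually allI)
  then show ?thesis
    by (simp add: LIM_zero_iff)
qed

lemma convergent_if_summable_diff:
  fixes X :: "nat \<Rightarrow> 'b::real_normed_vector"
  assumes "summable (\<lambda>n. X (Suc n) - X n)"
  shows "convergent X"
proof -
  obtain l where "(\<lambda>n. \<Sum>i<n. X (Suc i) - X i) \<longlonglongrightarrow> l"
    using assms unfolding summable_def sums_def by blast
  then have "(\<lambda>n. (X n - X 0) + X 0) \<longlonglongrightarrow> l + X 0"
    by (intro tendsto_add) (simp_all add: sum_lessThan_telescope)
  then show ?thesis
    unfolding convergent_def by auto
qed

lemma power_div_le_root_power:
  fixes c :: real
  assumes "0 < c" "c \<le> 1" "0 < N"
  shows "c ^ (n div N) * c \<le> root N c ^ n"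
proof -
  let ?q = "root N c"
  have q: "0 \<le> ?q" "?q \<le> 1" "?q ^ N = c"
    using assms by auto
  have "c ^ (n div N) * c = ?q ^ (N * (n div N)) * ?q ^ N"
    by (simp add: power_mult q)
  also have "\<dots> \<le> ?q ^ (N * (n div N)) * ?q ^ (n mod N)"
    using q assms by (intro mult_left_mono power_decreasing) auto
  also have "\<dots> = ?q ^ n"
    by (metis power_add div_mult_mod_eq mult.commute)
  finally show ?thesis .
qed

lemma summable_power_div:
  fixes c :: real
  assumes "0 \<le> c" "c < 1" "0 < N"
  shows "summable (\<lambda>n. c ^ (n div N))"
proof (rule summable_comparison_test')
  define c' where "c' = max c (1/2)"
  have c': "0 < c'" "c' < 1" "c \<le> c'"
    using assms unfolding c'_def by auto
  show "summable (\<lambda>n. root N c' ^ n / c')"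
    using c' assms by (intro summable_divide summable_geometric) auto
  fix n
  have "c ^ (n div N) \<le> c' ^ (n div N)"
    using assms c' by (intro power_mono) auto
  also have "\<dots> \<le> root N c' ^ n / c'"
    using power_div_le_root_power[of c' N n] c' assms by (simp add: field_simps)
  finally show "norm (c ^ (n div N)) \<le> root N c' ^ n / c'"
    using assms by simp
qed

lemma sum_pos_imp_ex_pos:
  fixes f :: "'a \<Rightarrow> 'b::{ordered_comm_monoid_add,linorder}"
  assumes "0 < sum f A"
  shows "\<exists>x\<in>A. 0 < f x"
proof (rule ccontr)
  assume "\<not> ?thesis"
  then have "sum f A \<le> 0"
    by (intro sum_nonpos) (metis linorder_not_le)
  with assms show False
    by simp
qed

section \<open>Contraction of the Bellman operator\<close>

definition sup_dist_at :: "('s \<Rightarrow> 'a::finite \<Rightarrow> real) \<Rightarrow> ('s \<Rightarrow> 'a \<Rightarrow> real) \<Rightarrow> 's \<Rightarrow> real" where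
  "sup_dist_at Q1 Q2 s = (MAX a. \<bar>Q1 s a - Q2 s a\<bar>)"

definition sup_dist :: "('s::finite \<Rightarrow> 'a::finite \<Rightarrow> real) \<Rightarrow> ('s \<Rightarrow> 'a \<Rightarrow> real) \<Rightarrow> real" where
  "sup_dist Q1 Q2 = (MAX s. sup_dist_at Q1 Q2 s)"

lemma abs_diff_le_sup_dist_at: "\<bar>Q1 s a - Q2 s a\<bar> \<le> sup_dist_at Q1 Q2 s"
  unfolding sup_dist_at_def by (rule Max_range_ge)

lemma sup_dist_at_nonneg: "0 \<le> sup_dist_at Q1 Q2 s"
  using abs_diff_le_sup_dist_at[of Q1 s undefined Q2] by linarith

lemma sup_dist_at_le_sup_dist: "sup_dist_at Q1 Q2 s \<le> sup_dist Q1 Q2"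
  unfolding sup_dist_def by (rule Max_range_ge)

lemma abs_diff_le_sup_dist: "\<bar>Q1 s a - Q2 s a\<bar> \<le> sup_dist Q1 Q2"
  using abs_diff_le_sup_dist_at sup_dist_at_le_sup_dist by (rule order.trans)

lemma sup_dist_nonneg: "0 \<le> sup_dist Q1 Q2"
  using sup_dist_at_nonneg sup_dist_at_le_sup_dist by (rule order.trans)

lemma sup_dist_le_0_imp_eq: "sup_dist Q1 Q2 \<le> 0 \<Longrightarrow> Q1 = Q2"
  using abs_diff_le_sup_dist[of Q1 _ _ Q2] by (intro ext) (smt (verit))

lemma tendsto_bellman:
  assumes "\<And>s a. (\<lambda>n. Q n s a) \<longlonglongrightarrow> L s a"
  shows "(\<lambda>n. bellman P R \<gamma> (Q n) s a) \<longlonglongrightarrow> bellman P R \<gamma> L s a"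
  unfolding bellman_def by (intro tendsto_intros tendsto_Max_range assms)

locale discounted_kernel =
  fixes P :: "'s::finite \<Rightarrow> 'a::finite \<Rightarrow> 's \<Rightarrow> real" and \<gamma> :: "'s \<Rightarrow> real"
  assumes P_nonneg: "\<And>s a s'. 0 \<le> P s a s'"
    and P_sum: "\<And>s a. (\<Sum>s'\<in>UNIV. P s a s') = 1"
    and discount_nonneg: "\<And>s. 0 \<le> \<gamma> s"
    and discount_le_one: "\<And>s. \<gamma> s \<le> 1"
begin

definition discount_step :: "('s \<Rightarrow> real) \<Rightarrow> 's \<Rightarrow> real" where
  "discount_step d s = (MAX a. \<Sum>s'\<in>UNIV. P s a s' * \<gamma> s' * d s')"

definition max_discount :: "nat \<Rightarrow> 's \<Rightarrow> real" where
  "max_discount n = (discount_step ^^ n) (\<lambda>_. 1)"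

lemma max_discount_0 [simp]: "max_discount 0 s = 1"
  by (simp add: max_discount_def)

lemma max_discount_Suc [simp]: "max_discount (Suc n) = discount_step (max_discount n)"
  by (simp add: max_discount_def)

lemma P_weighted_less_one:
  assumes "\<And>s'. x s' \<le> 1" "0 < P s a t" "x t < 1"
  shows "(\<Sum>s'\<in>UNIV. P s a s' * x s') < 1"
proof -
  have "(\<Sum>s'\<in>UNIV. P s a s' * x s') < (\<Sum>s'\<in>UNIV. P s a s')"
  proof (rule sum_strict_mono_ex1)
    show "\<forall>s'\<in>UNIV. P s a s' * x s' \<le> P s a s'"
      using assms(1) P_nonneg by (simp add: mult_left_le)
    show "\<exists>s'\<in>UNIV. P s a s' * x s' < P s a s'"
      using assms(2,3) by (intro bexI[of _ t]) auto
  qed simp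
  then show ?thesis using P_sum by simp
qed

lemma discount_step_mono:
  assumes "\<And>s. d s \<le> e s"
  shows "discount_step d s \<le> discount_step e s"
  unfolding discount_step_def Max_range_le_iff
proof
  fix a
  have "(\<Sum>s'\<in>UNIV. P s a s' * \<gamma> s' * d s') \<le> (\<Sum>s'\<in>UNIV. P s a s' * \<gamma> s' * e s')"
    by (intro sum_mono mult_left_mono) (simp_all add: assms P_nonneg discount_nonneg)
  also have "\<dots> \<le> (MAX a. \<Sum>s'\<in>UNIV. P s a s' * \<gamma> s' * e s')"
    by (rule Max_range_ge)
  finally show "(\<Sum>s'\<in>UNIV. P s a s' * \<gamma> s' * d s') \<le> \<dots>" .
qed

lemma discount_step_scale_le:
  assumes "0 \<le> m"
  shows "discount_step (\<lambda>s. m * d s) s \<le> m * discount_step d s"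
  unfolding discount_step_def Max_range_le_iff
proof
  fix a
  have "(\<Sum>s'\<in>UNIV. P s a s' * \<gamma> s' * (m * d s')) = m * (\<Sum>s'\<in>UNIV. P s a s' * \<gamma> s' * d s')"
    by (simp add: sum_distrib_left algebra_simps)
  also have "\<dots> \<le> m * (MAX a. \<Sum>s'\<in>UNIV. P s a s' * \<gamma> s' * d s')"
    by (rule mult_left_mono[OF Max_range_ge assms])
  finally show "(\<Sum>s'\<in>UNIV. P s a s' * \<gamma> s' * (m * d s')) \<le> \<dots>" .
qed

lemma max_discount_bounds: "0 \<le> max_discount n s \<and> max_discount n s \<le> 1"
proof (induction n arbitrary: s)
  case (Suc n)
  have "0 \<le> P s a s' * \<gamma> s' * max_discount n s'" "P s a s' * \<gamma> s' * max_discount n s' \<le> P s a s'"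
    for a s'
  proof -
    have "0 \<le> \<gamma> s' * max_discount n s'" "\<gamma> s' * max_discount n s' \<le> 1"
      using Suc discount_nonneg[of s'] discount_le_one[of s'] by (simp_all add: mult_le_one)
    then show "0 \<le> P s a s' * \<gamma> s' * max_discount n s'" "P s a s' * \<gamma> s' * max_discount n s' \<le> P s a s'"
      using P_nonneg[of s a s'] by (simp_all add: mult.assoc mult_left_le)
  qed
  then have lo: "0 \<le> (\<Sum>s'\<in>UNIV. P s a s' * \<gamma> s' * max_discount n s')"
    and hi: "(\<Sum>s'\<in>UNIV. P s a s' * \<gamma> s' * max_discount n s') \<le> 1" for a
    using sum_mono[of UNIV "\<lambda>s'. P s a s' * \<gamma> s' * max_discount n s'" "P s a"] P_sum[of s a]
    by (auto intro: sum_nonneg)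
  have "0 \<le> discount_step (max_discount n) s"
    unfolding discount_step_def using lo Max_range_ge by (rule order.trans)
  then show ?case
    using hi by (simp add: discount_step_def Max_range_le_iff)
qed simp

lemma max_discount_antimono:
  assumes "m \<le> n"
  shows "max_discount n s \<le> max_discount m s"
proof -
  have Suc_le: "max_discount (Suc k) s \<le> max_discount k s" for k s
  proof (induction k arbitrary: s)
    case 0
    then show ?case using max_discount_bounds[of 1 s] by simp
  next
    case (Suc k)
    then show ?case using discount_step_mono by simp
  qed
  from assms show ?thesis
    by (induction n rule: dec_induct) (auto intro: order.trans[OF Suc_le] simp del: max_discount_Suc)
qed

lemma bellman_diff_le:
  "\<bar>bellman P R \<gamma> Q1 s a - bellman P R \<gamma> Q2 s a\<bar> \<le> (\<Sum>s'\<in>UNIV. P s a s' * \<gamma> s' * sup_dist_at Q1 Q2 s')"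
proof -
  have "bellman P R \<gamma> Q1 s a - bellman P R \<gamma> Q2 s a
      = (\<Sum>s'\<in>UNIV. P s a s' * \<gamma> s' * ((MAX a'. Q1 s' a') - (MAX a'. Q2 s' a')))"
    unfolding bellman_def sum_subtractf[symmetric] by (rule sum.cong) (auto simp: algebra_simps)
  also have "\<bar>\<dots>\<bar> \<le> (\<Sum>s'\<in>UNIV. \<bar>P s a s' * \<gamma> s' * ((MAX a'. Q1 s' a') - (MAX a'. Q2 s' a'))\<bar>)"
    by (rule sum_abs)
  also have "\<dots> \<le> (\<Sum>s'\<in>UNIV. P s a s' * \<gamma> s' * sup_dist_at Q1 Q2 s')"
  proof (rule sum_mono)
    fix s'
    have "0 \<le> P s a s' * \<gamma> s'"
      using P_nonneg discount_nonneg by simp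
    then show "\<bar>P s a s' * \<gamma> s' * ((MAX a'. Q1 s' a') - (MAX a'. Q2 s' a'))\<bar>
        \<le> P s a s' * \<gamma> s' * sup_dist_at Q1 Q2 s'"
      unfolding abs_mult sup_dist_at_def using abs_Max_diff_le[of "Q1 s'" "Q2 s'"]
      by (simp add: mult_left_mono abs_of_nonneg P_nonneg discount_nonneg)
  qed
  finally show ?thesis .
qed

lemma sup_dist_at_bellman_le:
  "sup_dist_at (bellman P R \<gamma> Q1) (bellman P R \<gamma> Q2) s \<le> discount_step (sup_dist_at Q1 Q2) s"
  unfolding sup_dist_at_def[of "bellman P R \<gamma> Q1"] Max_range_le_iff
proof
  fix a
  show "\<bar>bellman P R \<gamma> Q1 s a - bellman P R \<gamma> Q2 s a\<bar> \<le> discount_step (sup_dist_at Q1 Q2) s"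
    using bellman_diff_le[of R Q1 s a Q2] unfolding discount_step_def
    by (rule order.trans[OF _ Max_range_ge])
qed

lemma sup_dist_at_bellman_iter_le:
  "sup_dist_at ((bellman P R \<gamma> ^^ n) Q1) ((bellman P R \<gamma> ^^ n) Q2) s \<le> sup_dist Q1 Q2 * max_discount n s"
proof (induction n arbitrary: s)
  case 0
  then show ?case by (simp add: sup_dist_at_le_sup_dist)
next
  case (Suc n)
  have "sup_dist_at ((bellman P R \<gamma> ^^ Suc n) Q1) ((bellman P R \<gamma> ^^ Suc n) Q2) s
      \<le> discount_step (sup_dist_at ((bellman P R \<gamma> ^^ n) Q1) ((bellman P R \<gamma> ^^ n) Q2)) s"
    using sup_dist_at_bellman_le by simp
  also have "\<dots> \<le> discount_step (\<lambda>s. sup_dist Q1 Q2 * max_discount n s) s"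
    by (rule discount_step_mono) (rule Suc)
  also have "\<dots> \<le> sup_dist Q1 Q2 * max_discount (Suc n) s"
    using discount_step_scale_le[OF sup_dist_nonneg] by simp
  finally show ?case .
qed

lemma sup_dist_bellman_iter_le:
  assumes "\<And>s. max_discount n s \<le> c"
  shows "sup_dist ((bellman P R \<gamma> ^^ n) Q1) ((bellman P R \<gamma> ^^ n) Q2) \<le> c * sup_dist Q1 Q2"
  unfolding sup_dist_def[of "(bellman P R \<gamma> ^^ n) Q1"] Max_range_le_iff
proof
  fix s
  show "sup_dist_at ((bellman P R \<gamma> ^^ n) Q1) ((bellman P R \<gamma> ^^ n) Q2) s \<le> c * sup_dist Q1 Q2"
    by (rule order.trans[OF sup_dist_at_bellman_iter_le])
      (metis mult.commute mult_left_mono[OF assms sup_dist_nonneg])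
qed

lemma sup_dist_bellman_iter_le_power:
  assumes contraction: "\<And>s. max_discount N s \<le> c"
  shows "sup_dist ((bellman P R \<gamma> ^^ n) Q1) ((bellman P R \<gamma> ^^ n) Q2) \<le> c ^ (n div N) * sup_dist Q1 Q2"
proof -
  let ?B = "bellman P R \<gamma>"
  have c: "0 \<le> c"
    using max_discount_bounds contraction by (rule order.trans[OF conjunct1])
  have "sup_dist ((?B ^^ (k * N + r)) Q1) ((?B ^^ (k * N + r)) Q2) \<le> c ^ k * sup_dist Q1 Q2" for k r
  proof (induction k)
    case 0
    show ?case
      using sup_dist_bellman_iter_le[of r 1] max_discount_bounds by simp
  next
    case (Suc k)
    have "sup_dist ((?B ^^ (Suc k * N + r)) Q1) ((?B ^^ (Suc k * N + r)) Q2)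
        = sup_dist ((?B ^^ N) ((?B ^^ (k * N + r)) Q1)) ((?B ^^ N) ((?B ^^ (k * N + r)) Q2))"
      by (simp add: funpow_add add.assoc)
    also have "\<dots> \<le> c * sup_dist ((?B ^^ (k * N + r)) Q1) ((?B ^^ (k * N + r)) Q2)"
      by (rule sup_dist_bellman_iter_le[OF contraction])
    also have "\<dots> \<le> c * (c ^ k * sup_dist Q1 Q2)"
      by (rule mult_left_mono[OF Suc c])
    finally show ?case
      by simp
  qed
  from this[of "n div N" "n mod N"] show ?thesis
    by simp
qed

lemma bellman_fixpoint_unique:
  assumes contraction: "\<And>s. max_discount N s \<le> c" and "c < 1"
    and fixpoints: "bellman P R \<gamma> Q1 = Q1" "bellman P R \<gamma> Q2 = Q2"
  shows "Q1 = Q2"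
proof -
  have "(bellman P R \<gamma> ^^ N) Q = Q" if "bellman P R \<gamma> Q = Q" for Q
    using that by (induction N) auto
  then have "sup_dist Q1 Q2 \<le> c * sup_dist Q1 Q2"
    using sup_dist_bellman_iter_le[OF contraction, of R Q1 Q2] fixpoints by simp
  then have "sup_dist Q1 Q2 \<le> 0"
    using \<open>c < 1\<close> sup_dist_nonneg[of Q1 Q2] by (smt (verit) mult_le_cancel_right1)
  then show ?thesis
    by (rule sup_dist_le_0_imp_eq)
qed

lemma bellman_iter_converges:
  assumes contraction: "\<And>s. max_discount N s \<le> c" and "c < 1"
  obtains L where "bellman P R \<gamma> L = L" "\<And>s a. (\<lambda>n. (bellman P R \<gamma> ^^ n) Q0 s a) \<longlonglongrightarrow> L s a"
proof -
  let ?B = "bellman P R \<gamma>"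
  let ?Q = "\<lambda>n. (?B ^^ n) Q0"
  have "0 < N"
    using contraction[of undefined] \<open>c < 1\<close> by (cases N) auto
  have "0 \<le> c"
    using max_discount_bounds contraction by (rule order.trans[OF conjunct1])
  have "convergent (\<lambda>n. ?Q n s a)" for s a
  proof (rule convergent_if_summable_diff, rule summable_comparison_test')
    show "summable (\<lambda>n. c ^ (n div N) * sup_dist (?B Q0) Q0)"
      using summable_power_div[OF \<open>0 \<le> c\<close> \<open>c < 1\<close> \<open>0 < N\<close>] by (rule summable_mult2)
    fix n
    have "norm (?Q (Suc n) s a - ?Q n s a) \<le> sup_dist ((?B ^^ n) (?B Q0)) ((?B ^^ n) Q0)"
      unfolding real_norm_def funpow_Suc_right comp_apply by (rule abs_diff_le_sup_dist)
    also have "\<dots> \<le> c ^ (n div N) * sup_dist (?B Q0) Q0"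
      by (rule sup_dist_bellman_iter_le_power[OF contraction])
    finally show "norm (?Q (Suc n) s a - ?Q n s a) \<le> c ^ (n div N) * sup_dist (?B Q0) Q0" .
  qed
  then have L: "(\<lambda>n. ?Q n s a) \<longlonglongrightarrow> lim (\<lambda>n. ?Q n s a)" for s a
    by (simp add: convergent_LIMSEQ_iff)
  define L where "L s a = lim (\<lambda>n. ?Q n s a)" for s a
  have "?B L s a = L s a" for s a
  proof (rule LIMSEQ_unique)
    show "(\<lambda>n. ?B (?Q n) s a) \<longlonglongrightarrow> ?B L s a"
      using L unfolding L_def by (rule tendsto_bellman)
    show "(\<lambda>n. ?B (?Q n) s a) \<longlonglongrightarrow> L s a"
      using LIMSEQ_Suc[OF L[of s a]] unfolding L_def by simp
  qed
  then show ?thesis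
    using that L unfolding L_def by blast
qed

lemma P_row_pos: "\<exists>s'. 0 < P s a s'"
  using sum_pos_imp_ex_pos[of "P s a" UNIV] P_sum by simp

lemma max_discount_stuck_successor:
  assumes stuck: "\<forall>n. max_discount n s = 1"
  shows "\<exists>a. \<forall>s'. 0 < P s a s' \<longrightarrow> \<gamma> s' = 1 \<and> (\<forall>n. max_discount n s' = 1)"
proof (rule ccontr)
  assume no_action: "\<not> ?thesis"
  have "\<exists>s' n. 0 < P s a s' \<and> \<gamma> s' * max_discount n s' < 1" for a
  proof -
    obtain s' n where s': "0 < P s a s'" "\<gamma> s' \<noteq> 1 \<or> max_discount n s' \<noteq> 1"
      using no_action by (metis max_discount_0)
    have "\<gamma> s' * max_discount n s' \<le> \<gamma> s'" "\<gamma> s' * max_discount n s' \<le> max_discount n s'"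
      using max_discount_bounds[of n s'] discount_nonneg[of s'] discount_le_one[of s']
      by (simp_all add: mult_left_le mult_left_le_one_le)
    then have "\<gamma> s' * max_discount n s' < 1"
      using s'(2) max_discount_bounds[of n s'] discount_le_one[of s'] by linarith
    then show ?thesis
      using s'(1) by blast
  qed
  then obtain t m where tm: "\<And>a. 0 < P s a (t a) \<and> \<gamma> (t a) * max_discount (m a) (t a) < 1"
    by metis
  define n where "n = (MAX a. m a)"
  have "(\<Sum>s'\<in>UNIV. P s a s' * (\<gamma> s' * max_discount n s')) < 1" for a
  proof (rule P_weighted_less_one)
    show "\<gamma> s' * max_discount n s' \<le> 1" for s'
      using max_discount_bounds discount_nonneg discount_le_one by (simp add: mult_le_one)
    have "\<gamma> (t a) * max_discount n (t a) \<le> \<gamma> (t a) * max_discount (m a) (t a)"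
      unfolding n_def using max_discount_antimono[OF Max_range_ge] discount_nonneg
      by (rule mult_left_mono)
    then show "\<gamma> (t a) * max_discount n (t a) < 1"
      using tm by (meson le_less_trans)
  qed (use tm in blast)
  then have "max_discount (Suc n) s < 1"
    by (simp add: discount_step_def Max_range_less_iff mult.assoc)
  with stuck show False
    by (metis less_irrefl)
qed

lemma max_discount_eventually_lt_one:
  assumes discount_lt_one: "\<And>s. s \<in> Sbot \<Longrightarrow> \<gamma> s < 1"
    and no_closed_set: "\<And>M (f::'s \<Rightarrow> 'a). M \<noteq> {} \<Longrightarrow> M \<inter> Sbot = {}
      \<Longrightarrow> (\<forall>s\<in>M. \<forall>s'. 0 < P s (f s) s' \<longrightarrow> s' \<in> M) \<Longrightarrow> False"
  obtains N where "\<And>s. max_discount N s < 1"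
proof (cases "\<exists>s. \<forall>n. max_discount n s = 1")
  case False
  then have "\<forall>s. \<exists>n. max_discount n s < 1"
    using max_discount_bounds by (metis order_less_le)
  then obtain m where m: "\<And>s. max_discount (m s) s < 1"
    by metis
  have "max_discount (MAX s. m s) s < 1" for s
    using max_discount_antimono[OF Max_range_ge, of m s s] m[of s] by linarith
  then show ?thesis
    using that by blast
next
  case True
  then obtain s where s: "\<forall>n. max_discount n s = 1"
    by blast
  define M where "M = {s'. \<gamma> s' = 1 \<and> (\<forall>n. max_discount n s' = 1)}"
  define f where "f x = (SOME a. \<forall>s'. 0 < P x a s' \<longrightarrow> s' \<in> M)" for x
  have f_into_M: "s' \<in> M" if "\<forall>n. max_discount n x = 1" "0 < P x (f x) s'" for x s'
  proof -
    have "\<exists>a. \<forall>s'. 0 < P x a s' \<longrightarrow> s' \<in> M"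
      using max_discount_stuck_successor[OF that(1)] unfolding M_def by blast
    then have "\<forall>s'. 0 < P x (f x) s' \<longrightarrow> s' \<in> M"
      unfolding f_def by (rule someI_ex)
    then show ?thesis
      using that(2) by blast
  qed
  obtain s' where "0 < P s (f s) s'"
    using P_row_pos by blast
  then have "M \<noteq> {}"
    using f_into_M[OF s] by blast
  moreover have "M \<inter> Sbot = {}"
    using discount_lt_one unfolding M_def by force
  moreover have "\<forall>x\<in>M. \<forall>s'. 0 < P x (f x) s' \<longrightarrow> s' \<in> M"
    using f_into_M unfolding M_def by blast
  ultimately show ?thesis
    using no_closed_set by blast
qed

end

section \<open>Termination in episodic learning processes\<close>

context
  fixes P :: "'s::finite \<Rightarrow> 'a::finite \<Rightarrow> 's \<Rightarrow> real" and rho :: "'s \<Rightarrow> real"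
    and Sbot :: "'s set" and s0 :: 's
  assumes elp: "is_ELP P rho Sbot s0"
begin

lemma elp_P_nonneg: "0 \<le> P s a s'"
  using elp unfolding is_ELP_def by blast

lemma elp_P_sum: "(\<Sum>s'\<in>UNIV. P s a s') = 1"
  using elp unfolding is_ELP_def by blast

lemma elp_s0_terminal: "s0 \<in> Sbot"
  using elp unfolding is_ELP_def by blast

lemma elp_P_terminal: "s \<in> Sbot \<Longrightarrow> P s a s' = rho s'"
  using elp unfolding is_ELP_def by blast

lemma elp_reachable: "\<exists>pol t. is_policy pol \<and> 1 \<le> t \<and> 0 < state_dist P pol s0 t s"
  using elp unfolding is_ELP_def by blast

lemma elp_survival_summable:
  "is_policy pol \<Longrightarrow> summable (\<lambda>t. \<Sum>s\<in>UNIV. surv_dist P pol s0 Sbot (Suc t) s)"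
  using elp unfolding is_ELP_def finite_exp_term_def by blast

lemma trans_pol_nonneg: "is_policy pol \<Longrightarrow> 0 \<le> trans_pol P pol s s'"
  unfolding trans_pol_def is_policy_def by (intro sum_nonneg) (simp add: elp_P_nonneg)

lemma trans_pol_terminal: "is_policy pol \<Longrightarrow> s \<in> Sbot \<Longrightarrow> trans_pol P pol s s' = rho s'"
  unfolding trans_pol_def is_policy_def by (simp add: elp_P_terminal sum_distrib_right[symmetric])

lemma surv_dist_nonneg: "is_policy pol \<Longrightarrow> 0 \<le> surv_dist P pol s0 Sbot t s"
  by (induction t arbitrary: s) (auto intro!: sum_nonneg simp: trans_pol_nonneg)

lemma state_dist_nonneg: "is_policy pol \<Longrightarrow> 0 \<le> state_dist P pol s0 t s"
  by (induction t arbitrary: s) (auto intro!: sum_nonneg simp: trans_pol_nonneg)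

lemma surv_dist_1: "is_policy pol \<Longrightarrow> surv_dist P pol s0 Sbot (Suc 0) s = rho s"
  by (simp add: trans_pol_terminal elp_s0_terminal if_distrib[of "\<lambda>c. c * _"] cong: if_cong)

lemma state_dist_1: "is_policy pol \<Longrightarrow> state_dist P pol s0 (Suc 0) s = rho s"
  by (simp add: trans_pol_terminal elp_s0_terminal if_distrib[of "\<lambda>c. c * _"] cong: if_cong)

lemma surv_dist_Suc_ge:
  assumes "is_policy pol" "x \<notin> Sbot"
  shows "surv_dist P pol s0 Sbot u x * trans_pol P pol x y \<le> surv_dist P pol s0 Sbot (Suc u) y"
  using member_le_sum[of x UNIV
      "\<lambda>x. (if 1 \<le> u \<and> x \<in> Sbot then 0 else surv_dist P pol s0 Sbot u x) * trans_pol P pol x y"]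
    assms surv_dist_nonneg trans_pol_nonneg
  by simp

lemma surv_mass_tendsto_0:
  "is_policy pol \<Longrightarrow> (\<lambda>t. \<Sum>s\<in>UNIV. surv_dist P pol s0 Sbot (Suc t) s) \<longlonglongrightarrow> 0"
  using elp_survival_summable by (rule summable_LIMSEQ_zero)

lemma surv_dist_le_surv_mass:
  "is_policy pol \<Longrightarrow> surv_dist P pol s0 Sbot t s \<le> (\<Sum>s\<in>UNIV. surv_dist P pol s0 Sbot t s)"
  by (rule member_le_sum) (simp_all add: surv_dist_nonneg del: surv_dist.simps)

lemma surv_dist_tendsto_0: "is_policy pol \<Longrightarrow> (\<lambda>t. surv_dist P pol s0 Sbot (Suc t) s) \<longlonglongrightarrow> 0"
  by (rule Lim_null_comparison[OF _ surv_mass_tendsto_0])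
    (simp_all add: always_eventually surv_dist_nonneg surv_dist_le_surv_mass del: surv_dist.simps)

lemma Jval_sums:
  assumes pol: "is_policy pol"
  shows "(\<lambda>t. \<Sum>s\<in>UNIV. surv_dist P pol s0 Sbot (Suc t) s * R s) sums Jval P R s0 Sbot pol"
  unfolding Jval_def
proof (intro summable_sums summable_sum)
  fix s
  show "summable (\<lambda>t. surv_dist P pol s0 Sbot (Suc t) s * R s)"
  proof (rule summable_comparison_test')
    show "summable (\<lambda>t. (\<Sum>s\<in>UNIV. surv_dist P pol s0 Sbot (Suc t) s) * \<bar>R s\<bar>)"
      using elp_survival_summable[OF pol] by (rule summable_mult2)
    show "norm (surv_dist P pol s0 Sbot (Suc t) s * R s) \<le> (\<Sum>s\<in>UNIV. surv_dist P pol s0 Sbot (Suc t) s) * \<bar>R s\<bar>"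
      for t
      using surv_dist_le_surv_mass[OF pol] surv_dist_nonneg[OF pol]
      by (simp add: abs_mult mult_right_mono del: surv_dist.simps)
  qed
qed

lemma surv_dist_pos_if_reachable:
  assumes pol': "is_policy pol'" and pol: "is_policy pol"
    and agree: "\<And>x. x \<notin> M \<Longrightarrow> trans_pol P pol x = trans_pol P pol' x"
    and "1 \<le> t" "0 < state_dist P pol' s0 t s"
  shows "\<exists>u\<ge>1. \<exists>x\<in>insert s M. 0 < surv_dist P pol s0 Sbot u x"
  using assms(4,5)
proof (induction t arbitrary: s)
  case 0
  then show ?case by simp
next
  case (Suc t s)
  show ?case
  proof (cases "t = 0")
    case True
    then show ?thesis
      using Suc.prems state_dist_1[OF pol'] surv_dist_1[OF pol] by (intro exI[of _ 1]) auto
  next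
    case False
    obtain x where "0 < state_dist P pol' s0 t x * trans_pol P pol' x s"
      using Suc.prems sum_pos_imp_ex_pos by fastforce
    then have x: "0 < state_dist P pol' s0 t x" "0 < trans_pol P pol' x s"
      using state_dist_nonneg[OF pol', of t x] trans_pol_nonneg[OF pol', of x s]
      by (auto simp: zero_less_mult_iff)
    then obtain u y where u: "1 \<le> u" "y \<in> insert x M" "0 < surv_dist P pol s0 Sbot u y"
      using Suc.IH False by force
    consider "y \<in> M" | "x \<notin> M" "x \<in> Sbot" | "y = x" "x \<notin> M" "x \<notin> Sbot"
      using u(2) by blast
    then show ?thesis
    proof cases
      case 1
      then show ?thesis using u by blast
    next
      case 2
      then show ?thesis
        using x trans_pol_terminal[OF pol'] surv_dist_1[OF pol] by (intro exI[of _ 1]) auto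
    next
      case 3
      then have "0 < surv_dist P pol s0 Sbot u x * trans_pol P pol x s"
        using u x agree by simp
      then have "0 < surv_dist P pol s0 Sbot (Suc u) s"
        using surv_dist_Suc_ge[OF pol \<open>x \<notin> Sbot\<close>] by (rule less_le_trans)
      then show ?thesis
        by (intro exI[of _ "Suc u"]) auto
    qed
  qed
qed

lemma surv_mass_closed_mono:
  assumes pol: "is_policy pol" and "M \<inter> Sbot = {}"
    and closed: "\<And>x. x \<in> M \<Longrightarrow> (\<Sum>y\<in>M. trans_pol P pol x y) = 1"
  shows "(\<Sum>x\<in>M. surv_dist P pol s0 Sbot t x) \<le> (\<Sum>y\<in>M. surv_dist P pol s0 Sbot (Suc t) y)"
proof -
  let ?sv = "surv_dist P pol s0 Sbot t"
  have "(\<Sum>x\<in>M. ?sv x) = (\<Sum>x\<in>M. ?sv x * (\<Sum>y\<in>M. trans_pol P pol x y))"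
    by (simp add: closed)
  also have "\<dots> = (\<Sum>y\<in>M. \<Sum>x\<in>M. ?sv x * trans_pol P pol x y)"
    unfolding sum_distrib_left by (rule sum.swap)
  also have "\<dots> = (\<Sum>y\<in>M. \<Sum>x\<in>M. (if 1 \<le> t \<and> x \<in> Sbot then 0 else ?sv x) * trans_pol P pol x y)"
    using \<open>M \<inter> Sbot = {}\<close> by (intro sum.cong) auto
  also have "\<dots> \<le> (\<Sum>y\<in>M. \<Sum>x\<in>UNIV. (if 1 \<le> t \<and> x \<in> Sbot then 0 else ?sv x) * trans_pol P pol x y)"
    by (intro sum_mono sum_mono2) (auto simp: surv_dist_nonneg[OF pol] trans_pol_nonneg[OF pol])
  also have "\<dots> = (\<Sum>y\<in>M. surv_dist P pol s0 Sbot (Suc t) y)"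
    by simp
  finally show ?thesis .
qed

lemma elp_no_closed_set:
  fixes M :: "'s set" and f :: "'s \<Rightarrow> 'a"
  assumes "M \<noteq> {}" and "M \<inter> Sbot = {}" and closed: "\<forall>s\<in>M. \<forall>s'. 0 < P s (f s) s' \<longrightarrow> s' \<in> M"
  shows False
proof -
  obtain sM where sM: "sM \<in> M"
    using \<open>M \<noteq> {}\<close> by blast
  obtain pol' t where pol': "is_policy pol'" "1 \<le> t" "0 < state_dist P pol' s0 t sM"
    using elp_reachable by blast
  define pol where "pol s a = (if s \<in> M then (if a = f s then 1 else 0) else pol' s a)" for s a
  have "(\<Sum>a\<in>UNIV. pol s a) = 1" for s
    by (cases "s \<in> M") (use pol'(1) in \<open>auto simp: pol_def is_policy_def\<close>)
  then have pol: "is_policy pol"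
    using pol'(1) unfolding is_policy_def by (auto simp: pol_def)
  have trans_in_M: "trans_pol P pol x y = P x (f x) y" if "x \<in> M" for x y
    using that unfolding trans_pol_def pol_def by (simp add: if_distrib[of "\<lambda>c. c * _"] cong: if_cong)
  have "trans_pol P pol x = trans_pol P pol' x" if "x \<notin> M" for x
    using that unfolding trans_pol_def pol_def by auto
  then obtain u x where u: "1 \<le> u" "x \<in> M" "0 < surv_dist P pol s0 Sbot u x"
    using surv_dist_pos_if_reachable[OF pol'(1) pol _ pol'(2,3)] sM by (metis insert_absorb)
  have M_closed: "(\<Sum>y\<in>M. trans_pol P pol x y) = 1" if "x \<in> M" for x
  proof -
    have "(\<Sum>y\<in>M. P x (f x) y) = (\<Sum>y\<in>UNIV. P x (f x) y)"
      using closed that elp_P_nonneg by (intro sum.mono_neutral_left) (auto, metis order_le_less)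
    then show ?thesis
      using that by (simp add: trans_in_M elp_P_sum)
  qed
  have grow: "(\<Sum>y\<in>M. surv_dist P pol s0 Sbot u y) \<le> (\<Sum>y\<in>M. surv_dist P pol s0 Sbot (u + k) y)" for k
  proof (induction k)
    case (Suc k)
    then show ?case
      using surv_mass_closed_mono[OF pol \<open>M \<inter> Sbot = {}\<close> M_closed, of "u + k"]
      by (simp del: surv_dist.simps)
  qed simp
  have pos: "0 < (\<Sum>y\<in>M. surv_dist P pol s0 Sbot u y)"
    using u member_le_sum[of x M "surv_dist P pol s0 Sbot u"] surv_dist_nonneg[OF pol] by force
  obtain k where "(\<Sum>s\<in>UNIV. surv_dist P pol s0 Sbot (Suc (u + k)) s) < (\<Sum>y\<in>M. surv_dist P pol s0 Sbot u y)"
    using order_tendstoD(2)[OF surv_mass_tendsto_0[OF pol] pos] unfolding eventually_sequentially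
    by (metis le_add2)
  moreover have "(\<Sum>y\<in>M. surv_dist P pol s0 Sbot (Suc (u + k)) y) \<le> (\<Sum>s\<in>UNIV. surv_dist P pol s0 Sbot (Suc (u + k)) s)"
    by (intro sum_mono2) (simp_all add: surv_dist_nonneg[OF pol] del: surv_dist.simps)
  ultimately show False
    using grow[of "Suc k"] by simp
qed

end

section \<open>Optimality of greedy policies\<close>

lemma policy_weighted_le_Max:
  assumes "is_policy pol"
  shows "(\<Sum>a\<in>UNIV. pol x a * Q x a) \<le> (MAX a. Q x a)"
proof -
  have "(\<Sum>a\<in>UNIV. pol x a * Q x a) \<le> (\<Sum>a\<in>UNIV. pol x a * (MAX a. Q x a))"
    using assms unfolding is_policy_def by (intro sum_mono mult_left_mono Max_range_ge) auto
  also have "\<dots> = (MAX a. Q x a)"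
    using assms unfolding is_policy_def by (simp add: sum_distrib_right[symmetric])
  finally show ?thesis .
qed

lemma greedy_weighted_eq_Max:
  assumes "is_policy pol" "greedy Q pol"
  shows "(\<Sum>a\<in>UNIV. pol x a * Q x a) = (MAX a. Q x a)"
proof -
  have pointwise: "pol x a * Q x a = pol x a * (MAX a. Q x a)" for a
    using assms unfolding is_policy_def greedy_def by (cases "pol x a = 0") (auto simp: order_le_less)
  have "(\<Sum>a\<in>UNIV. pol x a * Q x a) = (\<Sum>a\<in>UNIV. pol x a * (MAX a. Q x a))"
    by (rule sum.cong[OF refl pointwise])
  also have "\<dots> = (MAX a. Q x a)"
    using assms unfolding is_policy_def by (simp add: sum_distrib_right[symmetric])
  finally show ?thesis .
qed

declare surv_dist.simps(2) [simp del]

context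
  fixes P :: "'s::finite \<Rightarrow> 'a::finite \<Rightarrow> 's \<Rightarrow> real" and rho :: "'s \<Rightarrow> real"
    and Sbot :: "'s set" and s0 :: 's and R :: "'s \<Rightarrow> real" and Qs :: "'s \<Rightarrow> 'a \<Rightarrow> real"
  assumes elp: "is_ELP P rho Sbot s0"
    and fixpoint: "bellman P R (gamma_epi Sbot) Qs = Qs"
begin

abbreviation arrival_value :: "'s \<Rightarrow> real" where
  "arrival_value s \<equiv> R s + gamma_epi Sbot s * (MAX a. Qs s a)"

definition start_value :: real where
  "start_value = (\<Sum>s\<in>UNIV. rho s * arrival_value s)"

text \<open>The reward collected up to time \<open>k + 1\<close>, with the rest of the episode replaced by the
  value \<open>max\<^sub>a Qs(S\<^sub>k\<^sub>+\<^sub>1, a)\<close> that \<open>Qs\<close> assigns to a non-terminal \<open>S\<^sub>k\<^sub>+\<^sub>1\<close>.\<close>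
definition bootstrapped_return :: "('s \<Rightarrow> 'a \<Rightarrow> real) \<Rightarrow> nat \<Rightarrow> real" where
  "bootstrapped_return pol k =
     (\<Sum>t<Suc k. \<Sum>s\<in>UNIV. surv_dist P pol s0 Sbot (Suc t) s * R s)
     + (\<Sum>s\<in>UNIV. surv_dist P pol s0 Sbot (Suc k) s * (gamma_epi Sbot s * (MAX a. Qs s a)))"

lemma fixpoint_expand: "Qs s a = (\<Sum>s'\<in>UNIV. P s a s' * arrival_value s')"
  using fun_cong[OF fun_cong[OF fixpoint, of s], of a] unfolding bellman_def by simp

lemma surv_dist_Suc_gamma_epi:
  "1 \<le> t \<Longrightarrow> surv_dist P pol s0 Sbot (Suc t) y
     = (\<Sum>x\<in>UNIV. gamma_epi Sbot x * surv_dist P pol s0 Sbot t x * trans_pol P pol x y)"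
  unfolding surv_dist.simps(2) by (intro sum.cong) (auto simp: gamma_epi_def)

lemma trans_pol_arrival_value:
  "(\<Sum>y\<in>UNIV. trans_pol P pol x y * arrival_value y) = (\<Sum>a\<in>UNIV. pol x a * Qs x a)"
proof -
  have "(\<Sum>y\<in>UNIV. trans_pol P pol x y * arrival_value y)
      = (\<Sum>y\<in>UNIV. \<Sum>a\<in>UNIV. pol x a * (P x a y * arrival_value y))"
    unfolding trans_pol_def by (simp add: sum_distrib_right mult.assoc)
  also have "\<dots> = (\<Sum>a\<in>UNIV. pol x a * Qs x a)"
    by (subst sum.swap) (simp add: sum_distrib_left[symmetric] fixpoint_expand[symmetric])
  finally show ?thesis .
qed

lemma surv_dist_arrival_value_Suc:
  "(\<Sum>y\<in>UNIV. surv_dist P pol s0 Sbot (Suc (Suc k)) y * arrival_value y)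
   = (\<Sum>x\<in>UNIV. gamma_epi Sbot x * surv_dist P pol s0 Sbot (Suc k) x * (\<Sum>a\<in>UNIV. pol x a * Qs x a))"
proof -
  let ?m = "\<lambda>x. gamma_epi Sbot x * surv_dist P pol s0 Sbot (Suc k) x"
  have "(\<Sum>y\<in>UNIV. surv_dist P pol s0 Sbot (Suc (Suc k)) y * arrival_value y)
      = (\<Sum>y\<in>UNIV. \<Sum>x\<in>UNIV. ?m x * (trans_pol P pol x y * arrival_value y))"
    by (simp add: surv_dist_Suc_gamma_epi sum_distrib_right mult.assoc)
  also have "\<dots> = (\<Sum>x\<in>UNIV. ?m x * (\<Sum>a\<in>UNIV. pol x a * Qs x a))"
    by (subst sum.swap) (simp add: sum_distrib_left[symmetric] trans_pol_arrival_value)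
  finally show ?thesis .
qed

lemma bootstrapped_return_0: "is_policy pol \<Longrightarrow> bootstrapped_return pol 0 = start_value"
  unfolding bootstrapped_return_def start_value_def
  by (simp add: surv_dist_1[OF elp] sum.distrib[symmetric] algebra_simps)

lemma bootstrapped_return_Suc:
  "bootstrapped_return pol (Suc k) = bootstrapped_return pol k
   + (\<Sum>x\<in>UNIV. gamma_epi Sbot x * surv_dist P pol s0 Sbot (Suc k) x
        * ((\<Sum>a\<in>UNIV. pol x a * Qs x a) - (MAX a. Qs x a)))"
proof -
  let ?r = "\<lambda>t. \<Sum>s\<in>UNIV. surv_dist P pol s0 Sbot (Suc t) s * R s"
  have "bootstrapped_return pol (Suc k)
      = (\<Sum>t<Suc k. ?r t) + (\<Sum>y\<in>UNIV. surv_dist P pol s0 Sbot (Suc (Suc k)) y * arrival_value y)"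
    unfolding bootstrapped_return_def by (simp add: sum.distrib[symmetric] algebra_simps)
  also have "\<dots> = (\<Sum>t<Suc k. ?r t)
      + (\<Sum>x\<in>UNIV. gamma_epi Sbot x * surv_dist P pol s0 Sbot (Suc k) x * (\<Sum>a\<in>UNIV. pol x a * Qs x a))"
    by (simp only: surv_dist_arrival_value_Suc)
  finally show ?thesis
    unfolding bootstrapped_return_def by (simp add: sum_subtractf algebra_simps)
qed

lemma bootstrapped_return_le:
  assumes pol: "is_policy pol"
  shows "bootstrapped_return pol k \<le> start_value"
proof (induction k)
  case 0
  then show ?case using bootstrapped_return_0[OF pol] by simp
next
  case (Suc k)
  have "gamma_epi Sbot x * surv_dist P pol s0 Sbot (Suc k) x
      * ((\<Sum>a\<in>UNIV. pol x a * Qs x a) - (MAX a. Qs x a)) \<le> 0" for x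
    using surv_dist_nonneg[OF elp pol] policy_weighted_le_Max[OF pol]
    by (intro mult_nonneg_nonpos) (simp_all add: gamma_epi_def)
  then show ?case
    using Suc bootstrapped_return_Suc[of pol k] sum_nonpos by (smt (verit))
qed

lemma bootstrapped_return_greedy:
  "is_policy pol \<Longrightarrow> greedy Qs pol \<Longrightarrow> bootstrapped_return pol k = start_value"
  by (induction k) (simp_all add: bootstrapped_return_0 bootstrapped_return_Suc greedy_weighted_eq_Max)

lemma bootstrapped_return_tendsto_Jval:
  assumes pol: "is_policy pol"
  shows "bootstrapped_return pol \<longlonglongrightarrow> Jval P R s0 Sbot pol"
proof -
  have "(\<lambda>k. \<Sum>t<Suc k. \<Sum>s\<in>UNIV. surv_dist P pol s0 Sbot (Suc t) s * R s) \<longlonglongrightarrow> Jval P R s0 Sbot pol"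
    using Jval_sums[OF elp pol] unfolding sums_def by (rule LIMSEQ_Suc)
  moreover have "(\<lambda>k. \<Sum>s\<in>UNIV. surv_dist P pol s0 Sbot (Suc k) s * (gamma_epi Sbot s * (MAX a. Qs s a)))
      \<longlonglongrightarrow> (\<Sum>s\<in>UNIV. 0 * (gamma_epi Sbot s * (MAX a. Qs s a)))"
    by (intro tendsto_intros surv_dist_tendsto_0[OF elp pol])
  ultimately show ?thesis
    unfolding bootstrapped_return_def[abs_def] using tendsto_add by fastforce
qed

lemma greedy_policy_optimal:
  assumes "is_policy polstar" "greedy Qs polstar" "is_policy pol"
  shows "Jval P R s0 Sbot pol \<le> Jval P R s0 Sbot polstar"
proof -
  have "bootstrapped_return polstar = (\<lambda>k. start_value)"
    using bootstrapped_return_greedy[OF assms(1,2)] by (rule ext)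
  then have "bootstrapped_return polstar \<longlonglongrightarrow> start_value"
    by simp
  then have "Jval P R s0 Sbot polstar = start_value"
    using bootstrapped_return_tendsto_Jval[OF assms(1)] LIMSEQ_unique by blast
  moreover have "Jval P R s0 Sbot pol \<le> start_value"
    using bootstrapped_return_tendsto_Jval[OF assms(3)] bootstrapped_return_le[OF assms(3)]
    by (intro LIMSEQ_le_const2) auto
  ultimately show ?thesis
    by simp
qed

end

theorem theorem1:
  fixes P :: "'s::finite \<Rightarrow> 'a::finite \<Rightarrow> 's \<Rightarrow> real"
    and R :: "'s \<Rightarrow> real" and rho :: "'s \<Rightarrow> real"
    and Sbot :: "'s set" and s0 :: 's and \<gamma> :: "'s \<Rightarrow> real"
  assumes elp: "is_ELP P rho Sbot s0"
    and gamma_range: "\<forall>s. 0 \<le> \<gamma> s \<and> \<gamma> s \<le> 1"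
    and gamma_term: "\<forall>s\<in>Sbot. \<gamma> s < 1"
  shows "(\<exists>!Q. bellman P R \<gamma> Q = Q)
    \<and> (\<forall>Q0 s a. (\<lambda>n. (bellman P R \<gamma> ^^ n) Q0 s a) \<longlonglongrightarrow> (THE Q. bellman P R \<gamma> Q = Q) s a)
    \<and> (\<gamma> = gamma_epi Sbot \<longrightarrow>
        (\<forall>Qstar. bellman P R \<gamma> Qstar = Qstar \<longrightarrow>
          (\<forall>polstar. is_policy polstar \<and> greedy Qstar polstar \<longrightarrow>
             (\<forall>pol. is_policy pol \<longrightarrow> Jval P R s0 Sbot pol \<le> Jval P R s0 Sbot polstar))))"
proof -
  interpret discounted_kernel P \<gamma>
    using elp_P_nonneg[OF elp] elp_P_sum[OF elp] gamma_range by unfold_locales auto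
  obtain N where "\<And>s. max_discount N s < 1"
  proof (rule max_discount_eventually_lt_one)
    show "\<gamma> s < 1" if "s \<in> Sbot" for s
      using gamma_term that by blast
    show False if "M \<noteq> {}" "M \<inter> Sbot = {}" "\<forall>s\<in>M. \<forall>s'. 0 < P s (f s) s' \<longrightarrow> s' \<in> M"
      for M and f :: "'s \<Rightarrow> 'a"
      using elp_no_closed_set[OF elp that] .
  qed blast
  then have contraction: "\<And>s. max_discount N s \<le> (MAX s. max_discount N s)" "(MAX s. max_discount N s) < 1"
    unfolding Max_range_less_iff by (blast intro: Max_range_ge)+
  have unique: "Q1 = Q2" if "bellman P R \<gamma> Q1 = Q1" "bellman P R \<gamma> Q2 = Q2" for Q1 Q2
    using bellman_fixpoint_unique[OF contraction that] .
  have limit: "\<exists>L. bellman P R \<gamma> L = L \<and> (\<forall>s a. (\<lambda>n. (bellman P R \<gamma> ^^ n) Q0 s a) \<longlonglongrightarrow> L s a)" for Q0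
    by (rule bellman_iter_converges[OF contraction]) blast
  then obtain L where L: "bellman P R \<gamma> L = L"
    by blast
  then have the_fixpoint: "(THE Q. bellman P R \<gamma> Q = Q) = L"
    using unique by blast
  show ?thesis
  proof (intro conjI allI impI)
    show "\<exists>!Q. bellman P R \<gamma> Q = Q"
      using L unique by blast
    show "(\<lambda>n. (bellman P R \<gamma> ^^ n) Q0 s a) \<longlonglongrightarrow> (THE Q. bellman P R \<gamma> Q = Q) s a" for Q0 s a
      using limit[of Q0] unique L unfolding the_fixpoint by blast
  next
    fix Qstar polstar pol :: "'s \<Rightarrow> 'a \<Rightarrow> real"
    assume "\<gamma> = gamma_epi Sbot" "bellman P R \<gamma> Qstar = Qstar"
      "is_policy polstar \<and> greedy Qstar polstar" "is_policy pol"
    then show "Jval P R s0 Sbot pol \<le> Jval P R s0 Sbot polstar"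
      using greedy_policy_optimal[OF elp] by blast
  qed
qed

end
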